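(* Let $G$ be a graph with $m$ edges and $n$ vertices and let $t=\min\{m,\lceil \frac{n^2}{4}-\frac{n}{4}+\frac12\rceil\}$. Then $G$ is a $t$-interval-PCG.
   Context: All trees are unrooted with edges weighted by nonnegative reals; $d_T(u,v)$ is the weight of the path between leaves $u,v$ of $T$. A graph $G$ is a $k$-interval-PCG if there exist a tree $T$ whose leaf set is $V(G)$ and $k$ pairwise disjoint intervals $I_1,\ldots,I_k$ of nonnegative reals such that $\{u,v\}\in E(G)$ iff $d_T(u,v)\in I_i$ for some $i$. *)

theory Defs
  imports "HOL-Analysis.Analysis"
begin

definition simple_graph :: "'a set \<Rightarrow> 'a set set \<Rightarrow> bool" where
  "simple_graph V E \<longleftrightarrow> finite V \<and> V \<noteq> {} \<and>
     E \<subseteq> {{u, v} | u v. u \<in> V \<and> v \<in> V \<and> u \<noteq> v}"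

text \<open>Nodes of the tree have type 'a + nat: leaves are labelled by graph vertices (Inl),
  internal nodes may use the countably many extra labels (Inr).\<close>

definition is_tpath :: "'b set \<Rightarrow> 'b set set \<Rightarrow> 'b list \<Rightarrow> 'b \<Rightarrow> 'b \<Rightarrow> bool" where
  "is_tpath N TE p u v \<longleftrightarrow> p \<noteq> [] \<and> hd p = u \<and> last p = v \<and> distinct p \<and> set p \<subseteq> N \<and>
     (\<forall>i. Suc i < length p \<longrightarrow> {p ! i, p ! Suc i} \<in> TE)"

definition is_cycle :: "'b set set \<Rightarrow> 'b list \<Rightarrow> bool" where
  "is_cycle TE c \<longleftrightarrow> length c \<ge> 3 \<and> distinct c \<and>
     (\<forall>i. Suc i < length c \<longrightarrow> {c ! i, c ! Suc i} \<in> TE) \<and> {last c, hd c} \<in> TE"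

definition path_weight :: "('b set \<Rightarrow> real) \<Rightarrow> 'b list \<Rightarrow> real" where
  "path_weight w p = (\<Sum>i<length p - 1. w {p ! i, p ! Suc i})"

definition weighted_tree :: "'b set \<Rightarrow> 'b set set \<Rightarrow> ('b set \<Rightarrow> real) \<Rightarrow> bool" where
  "weighted_tree N TE w \<longleftrightarrow> finite N \<and> N \<noteq> {} \<and>
     TE \<subseteq> {{x, y} | x y. x \<in> N \<and> y \<in> N \<and> x \<noteq> y} \<and>
     (\<forall>u\<in>N. \<forall>v\<in>N. \<exists>p. is_tpath N TE p u v) \<and>
     (\<nexists>c. is_cycle TE c) \<and>
     (\<forall>e\<in>TE. w e \<ge> 0)"

definition tree_leaves :: "'b set \<Rightarrow> 'b set set \<Rightarrow> 'b set" where
  "tree_leaves N TE = {x \<in> N. card {e \<in> TE. x \<in> e} \<le> 1}"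

definition tree_dist :: "'b set \<Rightarrow> 'b set set \<Rightarrow> ('b set \<Rightarrow> real) \<Rightarrow> 'b \<Rightarrow> 'b \<Rightarrow> real" where
  "tree_dist N TE w u v = (THE d. \<exists>p. is_tpath N TE p u v \<and> d = path_weight w p)"

definition interval_PCG :: "nat \<Rightarrow> 'a set \<Rightarrow> 'a set set \<Rightarrow> bool" where
  "interval_PCG k V E \<longleftrightarrow>
     (\<exists>(N :: ('a + nat) set) TE w (Is :: nat \<Rightarrow> real set).
        weighted_tree N TE w \<and> tree_leaves N TE = Inl ` V \<and>
        (\<forall>i<k. is_interval (Is i) \<and> Is i \<noteq> {} \<and> Is i \<subseteq> {0..}) \<and>
        (\<forall>i<k. \<forall>j<k. i \<noteq> j \<longrightarrow> Is i \<inter> Is j = {}) \<and>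
        (\<forall>u\<in>V. \<forall>v\<in>V. u \<noteq> v \<longrightarrow>
           ({u, v} \<in> E \<longleftrightarrow> (\<exists>i<k. tree_dist N TE w (Inl u) (Inl v) \<in> Is i))))"

end

theory Submission
  imports Defs
begin

text \<open>Hang the vertices as leaves of a star whose edge to v has weight 2^f(v), for an
  injection f of V into the naturals. The distance between leaves u and v is 2^f(u) + 2^f(v),
  and by uniqueness of binary expansions it determines the pair {u, v}. So the distances of
  edges and of non-edges form disjoint finite sets A and B, and k disjoint intervals separate
  them as soon as |A| \<le> k (cover A by singletons) or |B| < k (take the |B| + 1 gaps of B).
  Since (n choose 2) < 2t, one of the two holds for k = min(m, t): if m > t, there are
  (n choose 2) - m < t non-edges.\<close>

definition interval_family :: "nat \<Rightarrow> (nat \<Rightarrow> real set) \<Rightarrow> bool" where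
  "interval_family k Is \<longleftrightarrow>
     (\<forall>i<k. is_interval (Is i) \<and> Is i \<noteq> {} \<and> Is i \<subseteq> {0..}) \<and>
     (\<forall>i<k. \<forall>j<k. i \<noteq> j \<longrightarrow> Is i \<inter> Is j = {})"

lemma interval_family_pad:
  fixes J :: "nat \<Rightarrow> real set"
  assumes "0 \<le> M" "\<And>j. is_interval (J j)" "\<And>j. J j \<subseteq> {0..M}"
    and "\<And>i j. i \<noteq> j \<Longrightarrow> J i \<inter> J j = {}"
  obtains Is where "interval_family k Is" "\<And>j. Is j \<inter> {..M} = J j"
proof -
  define Is where "Is j = (if J j = {} then {M + 1 + real j} else J j)" for j
  have "is_interval (Is j)" for j
    using assms(2)[of j] is_interval_cc[of "M + 1 + real j" "M + 1 + real j"] by (simp add: Is_def)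
  moreover have "Is j \<noteq> {}" "Is j \<subseteq> {0..}" for j
    using assms(1) assms(3)[of j] by (auto simp: Is_def)
  moreover have "Is i \<inter> Is j = {}" if "i \<noteq> j" for i j
    using assms(3)[of i] assms(3)[of j] assms(4)[OF that] that by (auto simp: Is_def)
  ultimately have "interval_family k Is"
    by (simp add: interval_family_def)
  moreover have "Is j \<inter> {..M} = J j" for j
    using assms(3)[of j] by (auto simp: Is_def)
  ultimately show thesis
    using that by blast
qed

lemma card_below_eq_iff:
  fixes B :: "'a::linorder set"
  assumes "finite B" "a \<le> b"
  shows "card {y \<in> B. y < a} = card {y \<in> B. y < b} \<longleftrightarrow> B \<inter> {a..<b} = {}"
proof -
  have "{y \<in> B. y < b} = {y \<in> B. y < a} \<union> B \<inter> {a..<b}"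
    using assms(2) by auto
  also have "card \<dots> = card {y \<in> B. y < a} + card (B \<inter> {a..<b})"
    using assms(1) by (intro card_Un_disjoint) auto
  finally show ?thesis
    using assms(1) by simp
qed

lemma interval_family_covering_points:
  fixes A :: "real set"
  assumes "finite A" "0 \<le> M" "A \<subseteq> {0..M}" "card A \<le> k"
  obtains Is where "interval_family k Is" "A \<subseteq> (\<Union>i<k. Is i)" "\<And>i. Is i \<inter> {..M} \<subseteq> A"
proof -
  define xs where "xs = sorted_list_of_set A"
  have xs: "distinct xs" "set xs = A" "length xs = card A"
    using assms(1) by (simp_all add: xs_def)
  define J where "J j = (if j < length xs then {xs ! j} else {})" for j
  have J_A: "J j \<subseteq> A" for j
    using xs(2) by (auto simp: J_def)
  have "is_interval (J j)" for j
    using is_interval_cc[of "xs ! j" "xs ! j"] by (simp add: J_def)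
  moreover have "J j \<subseteq> {0..M}" for j
    using J_A assms(3) by blast
  moreover have "J i \<inter> J j = {}" if "i \<noteq> j" for i j
    using xs(1) that by (auto simp: J_def nth_eq_iff_index_eq)
  ultimately obtain Is where Is: "interval_family k Is" "\<And>j. Is j \<inter> {..M} = J j"
    using interval_family_pad[OF assms(2)] by metis
  have "A \<subseteq> (\<Union>i<k. Is i)"
  proof
    fix x assume "x \<in> A"
    then obtain j where "j < length xs" "x = xs ! j"
      using xs(2) by (metis in_set_conv_nth)
    then show "x \<in> (\<Union>i<k. Is i)"
      using Is(2)[of j] xs(3) assms(4) by (auto simp: J_def)
  qed
  then show thesis
    using that Is J_A by blast
qed

lemma interval_family_avoiding_points:
  fixes B :: "real set"
  assumes "finite B" "0 \<le> M" "card B < k"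
  obtains Is where "interval_family k Is" "{0..M} - B \<subseteq> (\<Union>i<k. Is i)"
    "\<And>i. Is i \<inter> {..M} \<subseteq> {0..M} - B"
proof -
  define J where "J j = {x \<in> {0..M} - B. card {y \<in> B. y < x} = j}" for j
  have "is_interval (J j)" for j
    unfolding is_interval_1
  proof (intro ballI allI impI)
    fix a b x assume a: "a \<in> J j" and b: "b \<in> J j" and x: "a \<le> x \<and> x \<le> b"
    then have "B \<inter> {a..<b} = {}"
      using card_below_eq_iff[OF assms(1), of a b] by (simp add: J_def)
    moreover have "b \<notin> B"
      using b by (simp add: J_def)
    ultimately have "B \<inter> {a..<x} = {}" "x \<notin> B"
      using x by (auto simp: order_le_less)
    then show "x \<in> J j"
      using a b x card_below_eq_iff[OF assms(1), of a x] by (auto simp: J_def)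
  qed
  moreover have "J j \<subseteq> {0..M}" for j
    by (auto simp: J_def)
  moreover have "J i \<inter> J j = {}" if "i \<noteq> j" for i j
    using that by (auto simp: J_def)
  ultimately obtain Is where Is: "interval_family k Is" "\<And>j. Is j \<inter> {..M} = J j"
    using interval_family_pad[OF assms(2)] by metis
  have "{0..M} - B \<subseteq> (\<Union>i<k. Is i)"
  proof
    fix x assume x: "x \<in> {0..M} - B"
    have "card {y \<in> B. y < x} \<le> card B"
      using assms(1) by (intro card_mono) auto
    with x show "x \<in> (\<Union>i<k. Is i)"
      using Is(2)[of "card {y \<in> B. y < x}"] assms(3) by (auto simp: J_def)
  qed
  moreover have "Is i \<inter> {..M} \<subseteq> {0..M} - B" for i
    using Is(2)[of i] by (auto simp: J_def)
  ultimately show thesis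
    using that Is(1) by blast
qed

lemma interval_family_separating:
  fixes A B :: "real set"
  assumes "finite A" "finite B" "A \<inter> B = {}" "A \<union> B \<subseteq> {0..}" "card A \<le> k \<or> card B < k"
  obtains Is where "interval_family k Is" "A \<subseteq> (\<Union>i<k. Is i)" "B \<inter> (\<Union>i<k. Is i) = {}"
proof -
  define M where "M = Max (insert 0 (A \<union> B))"
  have M: "0 \<le> M" "A \<subseteq> {0..M}" "B \<subseteq> {0..M}"
    using assms(1,2,4) by (auto simp: M_def)
  have avoids_B: "B \<inter> (\<Union>i<k. Is i) = {}"
    if "\<And>i. Is i \<inter> {..M} \<subseteq> S" "B \<inter> S = {}" for Is :: "nat \<Rightarrow> real set" and S
  proof (rule equals0I)
    fix y assume "y \<in> B \<inter> (\<Union>i<k. Is i)"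
    then obtain i where "y \<in> B" "y \<in> Is i"
      by blast
    with M(3) have "y \<in> Is i \<inter> {..M}"
      by auto
    with that \<open>y \<in> B\<close> show False
      by blast
  qed
  show thesis
    using assms(5)
  proof
    assume "card A \<le> k"
    then obtain Is where Is: "interval_family k Is" "A \<subseteq> (\<Union>i<k. Is i)"
      "\<And>i. Is i \<inter> {..M} \<subseteq> A"
      using interval_family_covering_points[OF assms(1) M(1,2)] by blast
    have "B \<inter> (\<Union>i<k. Is i) = {}"
      using avoids_B[of Is A] Is(3) assms(3) by blast
    with Is(1,2) show thesis
      by (rule that)
  next
    assume "card B < k"
    then obtain Is where Is: "interval_family k Is" "{0..M} - B \<subseteq> (\<Union>i<k. Is i)"
      "\<And>i. Is i \<inter> {..M} \<subseteq> {0..M} - B"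
      using interval_family_avoiding_points[OF assms(2) M(1)] by blast
    have "A \<subseteq> (\<Union>i<k. Is i)"
      using Is(2) M(2) assms(3) by blast
    moreover have "B \<inter> (\<Union>i<k. Is i) = {}"
      using avoids_B[of Is "{0..M} - B"] Is(3) by blast
    ultimately show thesis
      using Is(1) that by blast
  qed
qed

lemma interval_family_separating_image:
  fixes \<sigma> :: "'a \<Rightarrow> real"
  assumes "finite P" "E \<subseteq> P" "inj_on \<sigma> P" "\<And>e. e \<in> P \<Longrightarrow> 0 \<le> \<sigma> e"
    and "card E \<le> k \<or> card (P - E) < k"
  obtains Is where "interval_family k Is" "\<And>e. e \<in> P \<Longrightarrow> e \<in> E \<longleftrightarrow> \<sigma> e \<in> (\<Union>i<k. Is i)"
proof -
  have fin_E: "finite E"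
    using assms(1,2) finite_subset by blast
  then have "finite (\<sigma> ` E)" "finite (\<sigma> ` (P - E))"
    using assms(1) by simp_all
  moreover have "\<sigma> ` E \<inter> \<sigma> ` (P - E) = {}"
    using inj_on_image_Int[OF assms(3,2), of "P - E"] by auto
  moreover have "\<sigma> ` E \<union> \<sigma> ` (P - E) \<subseteq> {0..}"
    using assms(2,4) by auto
  moreover have "card (\<sigma> ` E) \<le> k \<or> card (\<sigma> ` (P - E)) < k"
    using assms(5) card_image_le[OF fin_E, of \<sigma>] card_image_le[of "P - E" \<sigma>] assms(1) by auto
  ultimately obtain Is where Is: "interval_family k Is" "\<sigma> ` E \<subseteq> (\<Union>i<k. Is i)"
    "\<sigma> ` (P - E) \<inter> (\<Union>i<k. Is i) = {}"
    by (rule interval_family_separating)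
  have "e \<in> E \<longleftrightarrow> \<sigma> e \<in> (\<Union>i<k. Is i)" if "e \<in> P" for e
    using that Is(2,3) by blast
  with Is(1) show thesis
    by (rule that)
qed

lemma is_tpath_singleton: "u \<in> N \<Longrightarrow> is_tpath N TE [u] u u"
  by (simp add: is_tpath_def)

lemma is_tpath_two:
  assumes "u \<noteq> v" "u \<in> N" "v \<in> N" "{u, v} \<in> TE"
  shows "is_tpath N TE [u, v] u v"
  unfolding is_tpath_def
proof (intro conjI allI impI)
  fix i assume "Suc i < length [u, v]"
  then show "{[u, v] ! i, [u, v] ! Suc i} \<in> TE"
    using assms(4) by simp
qed (use assms in simp_all)

lemma is_tpath_three:
  assumes "distinct [u, x, v]" "set [u, x, v] \<subseteq> N" "{u, x} \<in> TE" "{x, v} \<in> TE"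
  shows "is_tpath N TE [u, x, v] u v"
  unfolding is_tpath_def
proof (intro conjI allI impI)
  fix i assume "Suc i < length [u, x, v]"
  then have "i = 0 \<or> i = 1"
    by auto
  then show "{[u, x, v] ! i, [u, x, v] ! Suc i} \<in> TE"
    using assms(3,4) by auto
qed (use assms in simp_all)

definition star_nodes :: "'a set \<Rightarrow> ('a + nat) set" where
  "star_nodes V = insert (Inr 0) (Inl ` V)"

definition star_edges :: "'a set \<Rightarrow> ('a + nat) set set" where
  "star_edges V = (\<lambda>v. {Inl v, Inr 0}) ` V"

lemma star_edge_hub:
  assumes "{a, b} \<in> star_edges V"
  shows "a = Inr 0 \<longleftrightarrow> b \<noteq> Inr 0"
proof -
  obtain v where "{a, b} = {Inl v, Inr 0}"
    using assms by (auto simp: star_edges_def)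
  then show ?thesis
    by (auto simp: doubleton_eq_iff)
qed

lemma star_edges_mem:
  "v \<in> V \<Longrightarrow> {Inl v, Inr 0} \<in> star_edges V" "v \<in> V \<Longrightarrow> {Inr 0, Inl v} \<in> star_edges V"
  by (auto simp: star_edges_def insert_commute)

lemma star_connected:
  assumes "u \<in> star_nodes V" "v \<in> star_nodes V"
  shows "\<exists>p. is_tpath (star_nodes V) (star_edges V) p u v"
proof -
  consider "u = v" | b where "u = Inr 0" "v = Inl b" "b \<in> V" | a where "u = Inl a" "v = Inr 0" "a \<in> V"
    | a b where "u = Inl a" "v = Inl b" "a \<noteq> b" "a \<in> V" "b \<in> V"
    using assms by (auto simp: star_nodes_def)
  then show ?thesis
  proof cases
    case 1
    then show ?thesis
      using assms(1) is_tpath_singleton by metis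
  next
    case 2
    then show ?thesis
      by (intro exI[of _ "[u, v]"] is_tpath_two) (simp_all add: star_nodes_def star_edges_mem)
  next
    case 3
    then show ?thesis
      by (intro exI[of _ "[u, v]"] is_tpath_two) (simp_all add: star_nodes_def star_edges_mem)
  next
    case 4
    then show ?thesis
      by (intro exI[of _ "[u, Inr 0, v]"] is_tpath_three) (simp_all add: star_nodes_def star_edges_mem)
  qed
qed

lemma star_no_cycle: "\<not> is_cycle (star_edges V) c"
proof
  assume c: "is_cycle (star_edges V) c"
  then have len: "3 \<le> length c" and dist: "distinct c"
    and edge: "\<And>i. Suc i < length c \<Longrightarrow> c ! i = Inr 0 \<longleftrightarrow> c ! Suc i \<noteq> Inr 0"
    and closing: "last c = Inr 0 \<longleftrightarrow> hd c \<noteq> Inr 0"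
    unfolding is_cycle_def by (auto dest: star_edge_hub)
  have unique: "i = j" if "i < length c" "j < length c" "c ! i = Inr 0" "c ! j = Inr 0" for i j
    using nth_eq_iff_index_eq[OF dist that(1,2)] that(3,4) by simp
  have hub: "c ! 1 = Inr 0"
  proof (rule ccontr)
    assume "c ! 1 \<noteq> Inr 0"
    then have "c ! 0 = Inr 0" "c ! 2 = Inr 0"
      using edge[of 0] edge[of 1] len by (auto simp: numeral_2_eq_2)
    moreover have "0 < length c" "2 < length c"
      using len by auto
    ultimately show False
      using unique[of 0 2] by simp
  qed
  have ne: "c \<noteq> []"
    using len by auto
  then have "hd c = c ! 0" "last c = c ! (length c - 1)"
    by (simp_all add: hd_conv_nth last_conv_nth)
  moreover have "c ! 0 \<noteq> Inr 0" "c ! (length c - 1) \<noteq> Inr 0"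
    using unique[of 1 0] unique[of 1 "length c - 1"] hub len ne by auto
  ultimately show False
    using closing by simp
qed

lemma star_weighted_tree:
  assumes "finite V" "\<And>e. e \<in> star_edges V \<Longrightarrow> 0 \<le> w e"
  shows "weighted_tree (star_nodes V) (star_edges V) w"
  unfolding weighted_tree_def
proof (intro conjI ballI)
  show "finite (star_nodes V)" "star_nodes V \<noteq> {}"
    using assms(1) by (simp_all add: star_nodes_def)
  show "star_edges V \<subseteq> {{x, y} |x y. x \<in> star_nodes V \<and> y \<in> star_nodes V \<and> x \<noteq> y}"
    by (auto simp: star_nodes_def star_edges_def)
  show "\<nexists>c. is_cycle (star_edges V) c"
    using star_no_cycle by blast
qed (use assms(2) star_connected in auto)

lemma star_leaves:
  assumes "2 \<le> card V"
  shows "tree_leaves (star_nodes V) (star_edges V) = Inl ` V"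
proof -
  have "{e \<in> star_edges V. Inr 0 \<in> e} = star_edges V"
    by (auto simp: star_edges_def)
  moreover have "card (star_edges V) = card V"
    unfolding star_edges_def by (rule card_image) (auto simp: inj_on_def doubleton_eq_iff)
  moreover have "{e \<in> star_edges V. Inl v \<in> e} = {{Inl v, Inr 0}}" if "v \<in> V" for v
    using that by (auto simp: star_edges_def)
  ultimately show ?thesis
    using assms by (auto simp: tree_leaves_def star_nodes_def)
qed

lemma star_tpath_iff:
  assumes "u \<in> V" "v \<in> V" "u \<noteq> v"
  shows "is_tpath (star_nodes V) (star_edges V) p (Inl u) (Inl v) \<longleftrightarrow> p = [Inl u, Inr 0, Inl v]"
proof
  assume p: "is_tpath (star_nodes V) (star_edges V) p (Inl u) (Inl v)"
  then have ne: "p \<noteq> []" and dist: "distinct p"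
    and first: "p ! 0 = Inl u" and final: "p ! (length p - 1) = Inl v"
    and edge: "\<And>i. Suc i < length p \<Longrightarrow> p ! i = Inr 0 \<longleftrightarrow> p ! Suc i \<noteq> Inr 0"
    unfolding is_tpath_def by (auto simp: hd_conv_nth last_conv_nth dest: star_edge_hub)
  have unique: "i = j" if "i < length p" "j < length p" "p ! i = Inr 0" "p ! j = Inr 0" for i j
    using nth_eq_iff_index_eq[OF dist that(1,2)] that(3,4) by simp
  have "length p \<noteq> 1"
    using first final assms(3) by auto
  then have hub: "p ! 1 = Inr 0" "1 < length p"
    using edge[of 0] first ne by (auto simp: Suc_lessI)
  have "length p \<noteq> 2"
    using final hub by auto
  moreover have "\<not> 3 < length p"
  proof
    assume long: "3 < length p"
    then have "p ! 2 \<noteq> Inr 0"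
      using unique[of 1 2] hub by auto
    then have "p ! 3 = Inr 0"
      using edge[of 2] long by (simp add: numeral_3_eq_3)
    then show False
      using unique[of 1 3] hub long by auto
  qed
  ultimately have "length p = 3"
    using hub by linarith
  then show "p = [Inl u, Inr 0, Inl v]"
    using first hub final by (auto intro!: nth_equalityI simp: less_Suc_eq numeral_3_eq_3)
next
  assume "p = [Inl u, Inr 0, Inl v]"
  then show "is_tpath (star_nodes V) (star_edges V) p (Inl u) (Inl v)"
    using assms by (simp add: is_tpath_three star_nodes_def star_edges_mem)
qed

lemma star_tree_dist:
  assumes "u \<in> V" "v \<in> V" "u \<noteq> v"
  shows "tree_dist (star_nodes V) (star_edges V) w (Inl u) (Inl v) =
    w {Inl u, Inr 0} + w {Inr 0, Inl v}"
  using assms by (simp add: tree_dist_def star_tpath_iff path_weight_def numeral_2_eq_2)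

lemma twice_choose_two: "2 * (n choose 2) = n * (n - 1)"
  by (induction n) (simp_all add: numeral_2_eq_2 algebra_simps)

lemma choose_two_less_twice_ceiling:
  "n choose 2 < 2 * nat \<lceil>real n ^ 2 / 4 - real n / 4 + 1 / 2\<rceil>"
proof -
  let ?c = "nat \<lceil>real n ^ 2 / 4 - real n / 4 + 1 / 2\<rceil>"
  have "2 * real (n choose 2) = real n ^ 2 - real n"
    using arg_cong[OF twice_choose_two[of n], of real]
    by (cases n) (simp_all add: power2_eq_square algebra_simps)
  moreover have "real n ^ 2 / 4 - real n / 4 + 1 / 2 \<le> real ?c"
    by linarith
  ultimately have "real (n choose 2) < 2 * real ?c"
    by linarith
  then show ?thesis
    by (metis of_nat_less_iff of_nat_mult of_nat_numeral)
qed

lemma bit_sum_of_two_powers_iff: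
  assumes "a \<noteq> b"
  shows "bit ((2::nat) ^ a + 2 ^ b) n \<longleftrightarrow> n = a \<or> n = b"
  using assms by (subst bit_disjunctive_add_iff) (auto simp: bit_exp_iff)

lemma sum_of_two_powers_eq_iff:
  fixes a b c d :: nat
  assumes "a \<noteq> b" "c \<noteq> d"
  shows "(2::real) ^ a + 2 ^ b = 2 ^ c + 2 ^ d \<longleftrightarrow> {a, b} = {c, d}"
proof
  assume "(2::real) ^ a + 2 ^ b = 2 ^ c + 2 ^ d"
  then have "real ((2::nat) ^ a + 2 ^ b) = real (2 ^ c + 2 ^ d)"
    by simp
  then have "(2::nat) ^ a + 2 ^ b = 2 ^ c + 2 ^ d"
    by (simp only: of_nat_eq_iff)
  then have "n = a \<or> n = b \<longleftrightarrow> n = c \<or> n = d" for n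
    using bit_sum_of_two_powers_iff assms by metis
  then show "{a, b} = {c, d}"
    by blast
qed (auto simp: doubleton_eq_iff)

definition vertex_pairs :: "'a set \<Rightarrow> 'a set set" where
  "vertex_pairs V = {{u, v} | u v. u \<in> V \<and> v \<in> V \<and> u \<noteq> v}"

lemma vertex_pairs_eq: "vertex_pairs V = {e. e \<subseteq> V \<and> card e = 2}"
  by (auto simp: vertex_pairs_def card_2_iff)

lemma card_vertex_pairs: "finite V \<Longrightarrow> card (vertex_pairs V) = card V choose 2"
  by (simp add: vertex_pairs_eq n_subsets)

lemma inj_on_sum_of_two_powers:
  assumes "inj_on f V"
  shows "inj_on (\<lambda>e. \<Sum>x\<in>e. (2::real) ^ f x) (vertex_pairs V)"
proof (rule inj_onI)
  fix e e' assume "e \<in> vertex_pairs V" "e' \<in> vertex_pairs V"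
    and eq: "(\<Sum>x\<in>e. (2::real) ^ f x) = (\<Sum>x\<in>e'. 2 ^ f x)"
  then obtain u v u' v' where uv: "e = {u, v}" "u \<in> V" "v \<in> V" "u \<noteq> v"
    and uv': "e' = {u', v'}" "u' \<in> V" "v' \<in> V" "u' \<noteq> v'"
    by (auto simp: vertex_pairs_def)
  have "f u \<noteq> f v" "f u' \<noteq> f v'"
    using assms uv uv' by (auto dest: inj_onD)
  then have "f ` e = f ` e'"
    using eq uv(1,4) uv'(1,4) sum_of_two_powers_eq_iff by simp
  then show "e = e'"
    using assms uv uv' inj_on_image_eq_iff[of f V e e'] by simp
qed

lemma interval_PCGI:
  fixes N :: "('a + nat) set"
  assumes "weighted_tree N TE w" "tree_leaves N TE = Inl ` V" "interval_family k Is"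
    and "\<And>u v. u \<in> V \<Longrightarrow> v \<in> V \<Longrightarrow> u \<noteq> v \<Longrightarrow>
      {u, v} \<in> E \<longleftrightarrow> (\<exists>i<k. tree_dist N TE w (Inl u) (Inl v) \<in> Is i)"
  shows "interval_PCG k V E"
  unfolding interval_PCG_def
  using assms unfolding interval_family_def
  by (intro exI[of _ N] exI[of _ TE] exI[of _ w] exI[of _ Is]) simp

lemma interval_PCG_singleton: "interval_PCG k {a} {}"
proof (rule interval_PCGI)
  show "weighted_tree {Inl a} {} (\<lambda>_. 0)"
    unfolding weighted_tree_def
    by (auto simp: is_cycle_def intro: is_tpath_singleton)
  show "tree_leaves {Inl a} {} = Inl ` {a}"
    by (simp add: tree_leaves_def)
  show "interval_family k (\<lambda>i. {real i})"
    using is_interval_cc[of "real i" "real i" for i] by (simp add: interval_family_def)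
qed simp

lemma interval_PCG_if_few_edges_or_few_non_edges:
  assumes "simple_graph V E" "2 \<le> card V"
    and "card E \<le> k \<or> card (vertex_pairs V - E) < k"
  shows "interval_PCG k V E"
proof -
  have V: "finite V" and E: "E \<subseteq> vertex_pairs V"
    using assms(1) by (simp_all add: simple_graph_def vertex_pairs_def)
  obtain f :: "'a \<Rightarrow> nat" where f: "inj_on f V"
    using finite_imp_inj_to_nat_seg[OF V] by blast
  define w :: "('a + nat) set \<Rightarrow> real" where "w = sum (case_sum (\<lambda>v. 2 ^ f v) (\<lambda>_. 0))"
  define \<sigma> where "\<sigma> = (\<lambda>e. \<Sum>x\<in>e. (2::real) ^ f x)"
  have fin: "finite (vertex_pairs V)"
    using V by (simp add: vertex_pairs_eq)
  have inj: "inj_on \<sigma> (vertex_pairs V)"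
    using inj_on_sum_of_two_powers[OF f] by (simp add: \<sigma>_def)
  have nonneg: "0 \<le> \<sigma> e" for e
    by (simp add: \<sigma>_def sum_nonneg)
  obtain Is where Is: "interval_family k Is"
    "\<And>e. e \<in> vertex_pairs V \<Longrightarrow> e \<in> E \<longleftrightarrow> \<sigma> e \<in> (\<Union>i<k. Is i)"
    using interval_family_separating_image[OF fin E inj nonneg assms(3)] by blast
  show ?thesis
  proof (rule interval_PCGI)
    show "weighted_tree (star_nodes V) (star_edges V) w"
      using V by (rule star_weighted_tree) (auto simp: w_def intro: sum_nonneg split: sum.split)
    show "tree_leaves (star_nodes V) (star_edges V) = Inl ` V"
      using assms(2) by (rule star_leaves)
    show "interval_family k Is"
      by (fact Is(1))
    fix u v assume uv: "u \<in> V" "v \<in> V" "u \<noteq> v"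
    then have "tree_dist (star_nodes V) (star_edges V) w (Inl u) (Inl v) = \<sigma> {u, v}"
      by (simp add: star_tree_dist w_def \<sigma>_def)
    moreover have "{u, v} \<in> vertex_pairs V"
      using uv by (auto simp: vertex_pairs_def)
    ultimately show "{u, v} \<in> E \<longleftrightarrow>
        (\<exists>i<k. tree_dist (star_nodes V) (star_edges V) w (Inl u) (Inl v) \<in> Is i)"
      using Is(2) by auto
  qed
qed

theorem theorem3:
  fixes V :: "'a set" and E :: "'a set set"
  assumes "simple_graph V E"
  shows "interval_PCG
           (min (card E) (nat \<lceil>real (card V) ^ 2 / 4 - real (card V) / 4 + 1 / 2\<rceil>)) V E"
proof -
  define c where "c = nat \<lceil>real (card V) ^ 2 / 4 - real (card V) / 4 + 1 / 2\<rceil>"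
  have V: "finite V" "V \<noteq> {}" and E: "E \<subseteq> vertex_pairs V"
    using assms by (simp_all add: simple_graph_def vertex_pairs_def)
  then consider a where "V = {a}" | "2 \<le> card V"
    by (metis One_nat_def Suc_1 card_1_singletonE card_gt_0_iff less_eq_Suc_le order_neq_le_trans)
  then show ?thesis
  proof cases
    case 1
    then have "E = {}"
      using E by (auto simp: vertex_pairs_def)
    then show ?thesis
      using 1 interval_PCG_singleton by simp
  next
    case 2
    have "finite (vertex_pairs V)"
      using V(1) by (simp add: vertex_pairs_eq)
    then have "card (vertex_pairs V - E) = (card V choose 2) - card E"
      using V(1) E by (simp add: card_Diff_subset card_vertex_pairs finite_subset)
    then have "card E \<le> min (card E) c \<or> card (vertex_pairs V - E) < min (card E) c"
      using choose_two_less_twice_ceiling[of "card V"] by (auto simp: c_def)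
    then show ?thesis
      unfolding c_def by (rule interval_PCG_if_few_edges_or_few_non_edges[OF assms 2])
  qed
qed

end
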